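(* Let $\Sigma_N(z):=\left(\int_0^{z} h^N(x)^2\,\tilde h^N(x)\,dx\right)^{1/2}$ for $z\in[0,L_N]$, and let $A_N:=6\log\log N-\log\log\log N$. There exist constants $\sigma>0$ and $a>0$, depending only on $c$, such that, as $N\to\infty$, $$\frac{1}{N^{c}}\Sigma_N(L_N)^2\to\sigma^2,\qquad \frac{1}{N^{c}}\Sigma_N(A_N)^2\to\sigma^2,\qquad \frac{1}{N^{1-c}}\int_0^{A_N}N\,\tilde h^N(x)\,dx\to a .$$
   Context: Fix $c\in(0,1)$. For $\beta\in(0,1)$ put $\gamma_\beta=\sqrt{1-\beta^2}$ and $L_\beta=\gamma_\beta^{-1}\big(\pi-\arctan(\gamma_\beta/\beta)\big)$; the map $\beta\mapsto L_\beta$ is an increasing bijection from $(0,1)$ onto $(\pi/2,\infty)$. For every integer $N$ large enough that $c\log N+6\log\log N>\pi/2$, let $\beta_N\in(0,1)$ be defined by $L_{\beta_N}=c\log N+6\log\log N$, and write $L_N=L_{\beta_N}$, $\gamma_N=\gamma_{\beta_N}$, $\Omega_N=[0,L_N]$. Define, for $x\in\Omega_N$, $\tilde h^N(x)=\gamma_N^{-1}e^{\beta_N(x-L_N)}\sin(\gamma_N(L_N-x))$ and $h^N(x)=\frac{2\gamma_N}{L_N+\beta_N}e^{\beta_N(L_N-x)}\sin(\gamma_N(L_N-x))$. *)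

theory Defs
  imports "HOL-Analysis.Analysis"
begin

definition gam :: "real \<Rightarrow> real" where
  "gam b = sqrt (1 - b\<^sup>2)"

definition Lb :: "real \<Rightarrow> real" where
  "Lb b = (pi - arctan (gam b / b)) / gam b"

definition Ltarget :: "real \<Rightarrow> nat \<Rightarrow> real" where
  "Ltarget c N = c * ln (real N) + 6 * ln (ln (real N))"

text \<open>beta_N: the unique beta in (0,1) with L_beta = c log N + 6 log log N
  (meaningful for N large enough; unspecified otherwise).\<close>
definition betaN :: "real \<Rightarrow> nat \<Rightarrow> real" where
  "betaN c N = (THE b. 0 < b \<and> b < 1 \<and> Lb b = Ltarget c N)"

definition LN :: "real \<Rightarrow> nat \<Rightarrow> real" where
  "LN c N = Lb (betaN c N)"

definition gamN :: "real \<Rightarrow> nat \<Rightarrow> real" where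
  "gamN c N = gam (betaN c N)"

definition htilde :: "real \<Rightarrow> nat \<Rightarrow> real \<Rightarrow> real" where
  "htilde c N x = exp (betaN c N * (x - LN c N)) * sin (gamN c N * (LN c N - x)) / gamN c N"

definition hN :: "real \<Rightarrow> nat \<Rightarrow> real \<Rightarrow> real" where
  "hN c N x = 2 * gamN c N / (LN c N + betaN c N)
      * exp (betaN c N * (LN c N - x)) * sin (gamN c N * (LN c N - x))"

definition SigmaN :: "real \<Rightarrow> nat \<Rightarrow> real \<Rightarrow> real" where
  "SigmaN c N z = sqrt (integral {0..z} (\<lambda>x. (hN c N x)\<^sup>2 * htilde c N x))"

definition AN :: "nat \<Rightarrow> real" where
  "AN N = 6 * ln (ln (real N)) - ln (ln (ln (real N)))"

end

theory Submission
  imports Defs "HOL-Real_Asymp.Real_Asymp"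
begin

text \<open>
  Write \<open>\<beta>\<^sub>N = cos \<theta>\<^sub>N\<close>, so that \<open>\<gamma>\<^sub>N = sin \<theta>\<^sub>N\<close>; the equation defining \<open>\<beta>\<^sub>N\<close> then reads
  \<open>L\<^sub>N sin \<theta>\<^sub>N = \<pi> - \<theta>\<^sub>N\<close>, hence \<open>\<theta>\<^sub>N \<rightarrow> 0\<close> and \<open>(1 - \<beta>\<^sub>N) L\<^sub>N \<rightarrow> 0\<close>.
  Both integrands are elementary: \<open>hN\<^sup>2 \<cdot> htilde\<close> is a multiple of
  \<open>e\<^bsup>\<beta>(L-x)\<^esup> sin\<^sup>3 (\<gamma>(L-x))\<close> and \<open>htilde\<close> one of \<open>e\<^bsup>-\<beta>(L-x)\<^esup> sin (\<gamma>(L-x))\<close>, with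
  explicit antiderivatives whose values at \<open>x = 0\<close> are explicit too because \<open>\<gamma>L = \<pi> - \<theta>\<close>.
  With \<open>e\<^bsup>L\<^sub>N\<^esup> = N\<^sup>c (log N)\<^sup>6\<close> this gives \<open>\<Sigma>\<^sub>N(z)\<^sup>2 / N\<^sup>c = 64\<pi>\<^sup>4/c\<^sup>6 + o(1)\<close> up to a
  boundary term \<open>O(e\<^bsup>L\<^sub>N - z\<^esup> / (L\<^sub>N\<^sup>2 N\<^sup>c))\<close>, which is negligible both for \<open>z = L\<^sub>N\<close> and
  for \<open>z = A\<^sub>N\<close>, where \<open>e\<^bsup>L\<^sub>N - A\<^sub>N\<^esup> = N\<^sup>c log log N\<close>. Similarly the normalized integral of
  \<open>N \<cdot> htilde\<close> over \<open>[0, A\<^sub>N]\<close> equals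
  \<open>e\<^bsup>(1-\<beta>)(L-A)\<^esup> \<cdot> sin (\<gamma>A) / (\<gamma>A) \<cdot> A\<^sub>N / log log N\<close>, which tends to 6.
\<close>

section \<open>The angle parametrization of \<open>\<beta>\<^sub>N\<close>\<close>

definition angle_length :: "real \<Rightarrow> real" where
  "angle_length t = (pi - t) / sin t"

lemma angle_length_strict_antimono:
  assumes "0 < s" "s < t" "t \<le> pi/2"
  shows "angle_length t < angle_length s"
proof -
  have sin_s: "0 < sin s" using assms by (intro sin_gt_zero) auto
  have sin_st: "sin s < sin t" using assms by (subst sin_mono_less_eq) auto
  have "(pi - t) / sin t < (pi - s) / sin t"
    using assms sin_s sin_st by (intro divide_strict_right_mono) auto
  also have "\<dots> \<le> (pi - s) / sin s"
    using assms sin_s sin_st by (intro divide_left_mono) auto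
  finally show ?thesis unfolding angle_length_def .
qed

lemma arccos_between_0_pi_half:
  assumes "0 < b" "b < 1"
  shows "0 < arccos b" "arccos b < pi/2"
proof -
  show "0 < arccos b" using arccos_lt_bounded[of b] assms by auto
  have "arccos b < arccos 0" using assms by (intro arccos_less_arccos) auto
  then show "arccos b < pi/2" by simp
qed

lemma gam_eq_sin_arccos: "\<bar>b\<bar> \<le> 1 \<Longrightarrow> gam b = sin (arccos b)"
  unfolding gam_def by (simp add: sin_arccos)

lemma Lb_eq_angle_length:
  assumes "0 < b" "b < 1"
  shows "Lb b = angle_length (arccos b)"
proof -
  have sin: "sin (arccos b) = gam b" using assms by (simp add: gam_eq_sin_arccos)
  have "gam b / b = tan (arccos b)" using sin assms by (simp add: tan_def)
  then have "arctan (gam b / b) = arccos b"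
    using arccos_between_0_pi_half[OF assms] by (simp add: arctan_tan)
  then show ?thesis unfolding Lb_def angle_length_def sin by simp
qed

lemma Lb_strict_mono_on: "strict_mono_on {0<..<1} Lb"
proof (rule strict_mono_onI)
  fix b1 b2 :: real assume b: "b1 \<in> {0<..<1}" "b2 \<in> {0<..<1}" "b1 < b2"
  have "arccos b2 < arccos b1" using b by (intro arccos_less_arccos) auto
  then have "angle_length (arccos b1) < angle_length (arccos b2)"
    using b arccos_between_0_pi_half[of b1] arccos_between_0_pi_half[of b2]
    by (intro angle_length_strict_antimono) auto
  then show "Lb b1 < Lb b2" using b by (simp add: Lb_eq_angle_length)
qed

lemma angle_length_surj:
  assumes "pi/2 < T"
  obtains t where "0 < t" "t < pi/2" "angle_length t = T"
proof -
  have T0: "0 < T" using assms pi_gt_zero by linarith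
  define t1 where "t1 = pi / (2 * (T + 1))"
  have t1: "0 < t1" "t1 < pi/2" unfolding t1_def using T0 by (auto simp: field_simps)
  \<comment> \<open>from \<open>sin t1 \<le> t1\<close>: \<open>angle_length t1 \<ge> pi / t1 - 1 = 2 T + 1\<close>\<close>
  have "T \<le> (pi - t1) / t1"
  proof -
    have "pi / t1 = 2 * (T + 1)" unfolding t1_def using T0 by simp
    then show ?thesis using T0 t1 by (simp add: diff_divide_distrib)
  qed
  also have "\<dots> \<le> angle_length t1"
  proof -
    have "0 < sin t1" using t1 by (intro sin_gt_zero) auto
    then show ?thesis
      unfolding angle_length_def using t1 by (intro divide_left_mono sin_x_le_x) auto
  qed
  finally have upper: "T \<le> angle_length t1" .
  have lower: "angle_length (pi/2) \<le> T" unfolding angle_length_def using assms by simp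
  have "sin x \<noteq> 0" if "x \<in> {t1..pi/2}" for x
    using that t1 sin_gt_zero[of x] by auto
  then have "continuous_on {t1..pi/2} angle_length"
    unfolding angle_length_def by (intro continuous_intros) auto
  then obtain t where t: "t1 \<le> t" "t \<le> pi/2" "angle_length t = T"
    using IVT2'[of angle_length "pi/2" T t1] lower upper t1 by auto
  moreover have "t \<noteq> pi/2" using t assms unfolding angle_length_def by force
  ultimately show ?thesis using that[of t] t1 by linarith
qed

definition thetaN :: "real \<Rightarrow> nat \<Rightarrow> real" where
  "thetaN c N = arccos (betaN c N)"

lemma betaN_via_thetaN:
  assumes "pi/2 < Ltarget c N"
  shows "0 < thetaN c N" "thetaN c N < pi/2" "betaN c N = cos (thetaN c N)"
    "gamN c N = sin (thetaN c N)" "LN c N = Ltarget c N"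
    "sin (thetaN c N) * Ltarget c N = pi - thetaN c N"
proof -
  obtain t where t: "0 < t" "t < pi/2" "angle_length t = Ltarget c N"
    using angle_length_surj[OF assms] by blast
  have cos_t: "0 < cos t" "cos t < 1"
    using t cos_monotone_0_pi[of 0 t] by (auto intro!: cos_gt_zero)
  have arccos_cos_t: "arccos (cos t) = t" using t by (intro arccos_cos) auto
  have root: "0 < cos t \<and> cos t < 1 \<and> Lb (cos t) = Ltarget c N"
    using cos_t t by (simp add: Lb_eq_angle_length arccos_cos_t)
  have beta: "betaN c N = cos t"
    unfolding betaN_def
  proof (rule the_equality[where P = "\<lambda>b. 0 < b \<and> b < 1 \<and> Lb b = Ltarget c N", OF root])
    show "b = cos t" if "0 < b \<and> b < 1 \<and> Lb b = Ltarget c N" for b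
      using strict_mono_on_eqD[OF Lb_strict_mono_on] that root by auto
  qed
  then have theta: "thetaN c N = t"
    unfolding thetaN_def by (simp add: arccos_cos_t)
  show "0 < thetaN c N" "thetaN c N < pi/2" "betaN c N = cos (thetaN c N)"
    using t beta theta by simp_all
  show "gamN c N = sin (thetaN c N)"
    using cos_t unfolding gamN_def beta theta by (simp add: gam_eq_sin_arccos arccos_cos_t)
  show "LN c N = Ltarget c N" unfolding LN_def beta using root by simp
  have "0 < sin t" using t by (intro sin_gt_zero) auto
  then show "sin (thetaN c N) * Ltarget c N = pi - thetaN c N"
    using t(3) unfolding theta angle_length_def by (simp add: field_simps)
qed

section \<open>Elementary antiderivatives\<close>

definition exp_sin_antideriv :: "real \<Rightarrow> real \<Rightarrow> real \<Rightarrow> real" where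
  "exp_sin_antideriv b w u = exp (b * u) * (b * sin (w * u) - w * cos (w * u)) / (b\<^sup>2 + w\<^sup>2)"

lemma has_real_derivative_exp_sin_antideriv:
  assumes "b\<^sup>2 + w\<^sup>2 \<noteq> 0"
  shows "(exp_sin_antideriv b w has_real_derivative exp (b * u) * sin (w * u)) (at u)"
proof -
  have "((\<lambda>u. exp (b * u) * (b * sin (w * u) - w * cos (w * u))) has_real_derivative
      exp (b * u) * sin (w * u) * (b\<^sup>2 + w\<^sup>2)) (at u)"
    by (auto intro!: derivative_eq_intros simp: algebra_simps power2_eq_square)
  from DERIV_cdivide[OF this, of "b\<^sup>2 + w\<^sup>2"] show ?thesis
    unfolding exp_sin_antideriv_def[abs_def] nonzero_mult_div_cancel_right[OF assms] .
qed

lemma abs_exp_sin_antideriv_le: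
  "\<bar>exp_sin_antideriv b w u\<bar> \<le> exp (b * u) / sqrt (b\<^sup>2 + w\<^sup>2)"
proof (cases "b\<^sup>2 + w\<^sup>2 = 0")
  case True
  then show ?thesis unfolding exp_sin_antideriv_def by simp
next
  case False
  define q where "q = b\<^sup>2 + w\<^sup>2"
  have q: "0 < q" using False zero_le_power2[of b] zero_le_power2[of w] unfolding q_def by linarith
  have lagrange: "(b * sin (w * u) - w * cos (w * u))\<^sup>2 + (b * cos (w * u) + w * sin (w * u))\<^sup>2 = q"
  proof -
    have "(b * sin (w * u) - w * cos (w * u))\<^sup>2 + (b * cos (w * u) + w * sin (w * u))\<^sup>2
        = q * ((sin (w * u))\<^sup>2 + (cos (w * u))\<^sup>2)"
      unfolding q_def by algebra
    then show ?thesis by simp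
  qed
  have "\<bar>b * sin (w * u) - w * cos (w * u)\<bar> \<le> sqrt q"
    using lagrange zero_le_power2[of "b * cos (w * u) + w * sin (w * u)"]
    by (intro real_le_rsqrt, unfold power2_abs) linarith
  then have "\<bar>exp_sin_antideriv b w u\<bar> \<le> exp (b * u) * sqrt q / q"
    unfolding exp_sin_antideriv_def q_def[symmetric] using q
    by (simp add: abs_mult divide_right_mono)
  also have "\<dots> = exp (b * u) / sqrt q"
    using q by (simp add: field_simps real_sqrt_mult_self flip: real_sqrt_mult)
  finally show ?thesis unfolding q_def .
qed

lemma sin_cube: "sin (x::real) ^ 3 = (3 * sin x - sin (3 * x)) / 4"
proof -
  have "sin (3 * x) = sin (2 * x) * cos x + cos (2 * x) * sin x"
    using sin_add[of "2 * x" x] by simp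
  also have "\<dots> = sin x * (3 * (cos x)\<^sup>2 - (sin x)\<^sup>2)"
    unfolding sin_double cos_double by (simp add: algebra_simps power2_eq_square)
  also have "\<dots> = 3 * sin x - 4 * sin x ^ 3"
    unfolding cos_squared_eq by (simp add: algebra_simps power2_eq_square power3_eq_cube)
  finally show ?thesis by simp
qed

definition exp_sin_cube_antideriv :: "real \<Rightarrow> real \<Rightarrow> real \<Rightarrow> real" where
  "exp_sin_cube_antideriv b g u = (3 * exp_sin_antideriv b g u - exp_sin_antideriv b (3 * g) u) / 4"

lemma has_real_derivative_exp_sin_cube_antideriv:
  assumes "g \<noteq> 0"
  shows "(exp_sin_cube_antideriv b g has_real_derivative exp (b * u) * sin (g * u) ^ 3) (at u)"
proof -
  have "b\<^sup>2 + g\<^sup>2 \<noteq> 0" "b\<^sup>2 + (3 * g)\<^sup>2 \<noteq> 0" using assms by (auto simp: add_nonneg_eq_0_iff)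
  then have "(exp_sin_cube_antideriv b g has_real_derivative
      (3 * (exp (b * u) * sin (g * u)) - exp (b * u) * sin (3 * g * u)) / 4) (at u)"
    unfolding exp_sin_cube_antideriv_def[abs_def]
    by (intro DERIV_cdivide DERIV_diff DERIV_cmult has_real_derivative_exp_sin_antideriv)
  moreover have "sin (3 * g * u) = 3 * sin (g * u) - 4 * sin (g * u) ^ 3"
    using sin_cube[of "g * u"] by (simp add: mult.assoc)
  then have "(3 * (exp (b * u) * sin (g * u)) - exp (b * u) * sin (3 * g * u)) / 4
      = exp (b * u) * sin (g * u) ^ 3"
    by (simp only:) (simp add: algebra_simps)
  ultimately show ?thesis by (simp only:)
qed

lemma abs_exp_sin_cube_antideriv_le:
  assumes "b\<^sup>2 + g\<^sup>2 = 1"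
  shows "\<bar>exp_sin_cube_antideriv b g u\<bar> \<le> exp (b * u)"
proof -
  have "b\<^sup>2 + (3 * g)\<^sup>2 = 1 + 8 * g\<^sup>2" using assms by (simp add: power_mult_distrib)
  moreover have "1 \<le> sqrt (1 + 8 * g\<^sup>2)" by simp
  ultimately have "1 \<le> sqrt (b\<^sup>2 + (3 * g)\<^sup>2)" by metis
  then have "exp (b * u) / sqrt (b\<^sup>2 + (3 * g)\<^sup>2) \<le> exp (b * u) / 1"
    by (intro divide_left_mono) auto
  then have "\<bar>exp_sin_antideriv b (3 * g) u\<bar> \<le> exp (b * u)"
    using abs_exp_sin_antideriv_le[of b "3 * g" u] by simp
  moreover have "\<bar>exp_sin_antideriv b g u\<bar> \<le> exp (b * u)"
    using abs_exp_sin_antideriv_le[of b g u] assms by simp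
  ultimately show ?thesis unfolding exp_sin_cube_antideriv_def by simp
qed

lemma integral_reflected_antiderivative:
  assumes "\<And>u. (F has_real_derivative f u) (at u)" "0 \<le> z"
  shows "integral {0..z} (\<lambda>x. f (L - x)) = F L - F (L - z)"
proof -
  have "((\<lambda>x. - F (L - x)) has_real_derivative f (L - x)) (at x)" for x
  proof -
    have "((\<lambda>x. L - x) has_real_derivative -1) (at x)" by (auto intro!: derivative_eq_intros)
    from DERIV_minus[OF DERIV_chain2[OF assms(1) this]] show ?thesis by simp
  qed
  then have "((\<lambda>x. f (L - x)) has_integral - F (L - z) - - F (L - 0)) {0..z}"
    by (intro fundamental_theorem_of_calculus assms(2))
      (auto simp: has_real_derivative_iff_has_vector_derivative intro: has_vector_derivative_at_within)
  then show ?thesis by (simp add: integral_unique)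
qed

section \<open>Closed forms of the integrals\<close>

lemma integral_hN_sq_htilde:
  assumes "gamN c N \<noteq> 0" "0 \<le> z"
  shows "integral {0..z} (\<lambda>x. (hN c N x)\<^sup>2 * htilde c N x)
    = 4 * gamN c N / (LN c N + betaN c N)\<^sup>2
      * (exp_sin_cube_antideriv (betaN c N) (gamN c N) (LN c N)
         - exp_sin_cube_antideriv (betaN c N) (gamN c N) (LN c N - z))"
proof -
  define b g L where "b = betaN c N" "g = gamN c N" "L = LN c N"
  have "(hN c N x)\<^sup>2 * htilde c N x
      = 4 * g / (L + b)\<^sup>2 * (exp (b * (L - x)) * sin (g * (L - x)) ^ 3)" for x
  proof -
    have "exp (b * (L - x)) * exp (b * (x - L)) = 1" by (simp flip: exp_add add: algebra_simps)
    then show ?thesis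
      unfolding hN_def htilde_def b_g_L_def[symmetric] using assms(1)
      by (simp add: power2_eq_square power3_eq_cube field_simps)
  qed
  then have "integral {0..z} (\<lambda>x. (hN c N x)\<^sup>2 * htilde c N x)
      = 4 * g / (L + b)\<^sup>2 * integral {0..z} (\<lambda>x. exp (b * (L - x)) * sin (g * (L - x)) ^ 3)"
    by simp
  also have "integral {0..z} (\<lambda>x. exp (b * (L - x)) * sin (g * (L - x)) ^ 3)
      = exp_sin_cube_antideriv b g L - exp_sin_cube_antideriv b g (L - z)"
    using has_real_derivative_exp_sin_cube_antideriv assms
    by (intro integral_reflected_antiderivative) (auto simp: b_g_L_def)
  finally show ?thesis unfolding b_g_L_def .
qed

lemma integral_htilde:
  assumes "gamN c N \<noteq> 0" "0 \<le> z"
  shows "integral {0..z} (htilde c N)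
    = (exp_sin_antideriv (- betaN c N) (gamN c N) (LN c N)
       - exp_sin_antideriv (- betaN c N) (gamN c N) (LN c N - z)) / gamN c N"
proof -
  define b g L where "b = betaN c N" "g = gamN c N" "L = LN c N"
  have "htilde c N = (\<lambda>x. 1 / g * (exp (- b * (L - x)) * sin (g * (L - x))))"
    unfolding htilde_def b_g_L_def by (auto simp: algebra_simps)
  then have "integral {0..z} (htilde c N)
      = 1 / g * integral {0..z} (\<lambda>x. exp (- b * (L - x)) * sin (g * (L - x)))"
    by simp
  also have "integral {0..z} (\<lambda>x. exp (- b * (L - x)) * sin (g * (L - x)))
      = exp_sin_antideriv (- b) g L - exp_sin_antideriv (- b) g (L - z)"
  proof (rule integral_reflected_antiderivative)
    have "(- b)\<^sup>2 + g\<^sup>2 \<noteq> 0" using assms(1) unfolding b_g_L_def by simp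
    then show "(exp_sin_antideriv (- b) g has_real_derivative exp (- b * u) * sin (g * u)) (at u)" for u
      by (rule has_real_derivative_exp_sin_antideriv)
  qed (use assms(2) in simp)
  finally show ?thesis unfolding b_g_L_def by simp
qed

definition cube_endpoint_factor :: "real \<Rightarrow> real" where
  "cube_endpoint_factor t =
     (6 * cos t * sin t - (cos t * sin (3 * t) + 3 * sin t * cos (3 * t)) / (1 + 8 * (sin t)\<^sup>2)) / 4"

lemma exp_sin_cube_antideriv_endpoint:
  assumes "sin t * L = pi - t"
  shows "exp_sin_cube_antideriv (cos t) (sin t) L = exp (cos t * L) * cube_endpoint_factor t"
proof -
  have arg3: "3 * sin t * L = 3 * pi - 3 * t" using assms by (simp add: algebra_simps)
  have sin3: "sin (3 * pi - 3 * t) = sin (3 * t)" and cos3: "cos (3 * pi - 3 * t) = - cos (3 * t)"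
    by (simp_all add: sin_diff cos_diff)
  have norm1: "(cos t)\<^sup>2 + (sin t)\<^sup>2 = 1"
    and norm3: "(cos t)\<^sup>2 + (3 * sin t)\<^sup>2 = 1 + 8 * (sin t)\<^sup>2"
    using sin_cos_squared_add[of t] by (simp_all add: power_mult_distrib)
  show ?thesis
    unfolding exp_sin_cube_antideriv_def exp_sin_antideriv_def cube_endpoint_factor_def
      assms arg3 sin3 cos3 norm1 norm3
    by (simp add: algebra_simps)
qed

lemma exp_sin_antideriv_before_endpoint:
  assumes "sin t * L = pi - t"
  shows "exp_sin_antideriv (- cos t) (sin t) (L - z) = - exp (- cos t * (L - z)) * sin (sin t * z)"
proof -
  have arg: "sin t * (L - z) = pi - (t + sin t * z)" using assms by (simp add: algebra_simps)
  have "exp_sin_antideriv (- cos t) (sin t) (L - z)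
      = exp (- cos t * (L - z)) * (- cos t * sin (t + sin t * z) + sin t * cos (t + sin t * z))"
    unfolding exp_sin_antideriv_def arg by simp
  also have "- cos t * sin (t + sin t * z) + sin t * cos (t + sin t * z) = - sin (sin t * z)"
    using sin_diff[of "t + sin t * z" t] by (simp add: algebra_simps)
  finally show ?thesis by simp
qed

lemma exp_Ltarget:
  assumes "1 < N"
  shows "exp (Ltarget c N) = real N powr c * ln (real N) ^ 6"
proof -
  have "0 < ln (real N)" using assms by simp
  then have "exp (6 * ln (ln (real N))) = ln (real N) ^ 6"
    using exp_ln[of "ln (real N) ^ 6"] ln_realpow[of "ln (real N)" 6] by simp
  then show ?thesis
    using assms by (simp add: Ltarget_def exp_add powr_def)
qed

lemma exp_Ltarget_minus_AN:
  assumes "1 < ln (real N)"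
  shows "exp (Ltarget c N - AN N) = real N powr c * ln (ln (real N))"
proof -
  have "0 < real N" using assms by (cases "N = 0") auto
  moreover have "0 < ln (ln (real N))" using assms by simp
  ultimately show ?thesis by (simp add: Ltarget_def AN_def exp_add powr_def)
qed

lemma integral_htilde_eq:
  assumes "pi/2 < Ltarget c N" "0 \<le> z"
  shows "integral {0..z} (htilde c N)
    = exp (- cos (thetaN c N) * (Ltarget c N - z)) * sin (sin (thetaN c N) * z) / sin (thetaN c N)"
proof -
  note theta = betaN_via_thetaN[OF assms(1)]
  have "sin (thetaN c N) \<noteq> 0" using theta(1,2) sin_gt_zero[of "thetaN c N"] by auto
  then show ?thesis
    using integral_htilde[of c N z] exp_sin_antideriv_before_endpoint[OF theta(6), of 0]
      exp_sin_antideriv_before_endpoint[OF theta(6), of z] assms(2)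
    unfolding theta(3,4,5) by simp
qed

text \<open>
  With \<open>L = angle_length t\<close>, this is \<open>L\<^sup>6 e\<^bsup>-L\<^esup>\<close> times the main part of \<open>\<Sigma>\<^sup>2\<close> at angle \<open>t\<close>;
  at \<open>t = \<theta>\<^sub>N\<close> that main part over \<open>N\<^sup>c\<close> is \<open>sigma_profile \<theta>\<^sub>N \<cdot> (log N / L\<^sub>N)\<^sup>6\<close>.
\<close>
definition sigma_profile :: "real \<Rightarrow> real" where
  "sigma_profile t = 4 * sin t * angle_length t ^ 6 * exp (- ((1 - cos t) * angle_length t))
     * cube_endpoint_factor t / (angle_length t + cos t)\<^sup>2"

lemma sigma_profile_tendsto: "(sigma_profile \<longlongrightarrow> 64 * pi ^ 4) (at_right 0)"
  unfolding sigma_profile_def angle_length_def cube_endpoint_factor_def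
  by (real_asymp simp: field_simps power2_eq_square eval_nat_numeral)

lemma sqrt_power2_eq_abs: "(sqrt x)\<^sup>2 = \<bar>x\<bar>"
proof (cases "0 \<le> x")
  case False
  then have "(sqrt x)\<^sup>2 = (sqrt (- x))\<^sup>2" by (simp add: real_sqrt_minus)
  then show ?thesis using False by simp
qed simp

lemma sigma_profile_eq:
  assumes "0 < sin t" "0 < L" "sin t * L = pi - t"
  shows "4 * sin t / (L + cos t)\<^sup>2 * (exp (cos t * L) * cube_endpoint_factor t)
    = sigma_profile t * exp L / L ^ 6"
proof -
  have "angle_length t = L"
    using assms unfolding angle_length_def by (simp add: field_simps)
  moreover have "exp (cos t * L) = exp (- ((1 - cos t) * L)) * exp L"
    unfolding exp_add[symmetric] by (simp add: algebra_simps)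
  ultimately show ?thesis
    unfolding sigma_profile_def using assms(2) by (simp add: field_simps)
qed

lemma exp_sin_cube_antideriv_boundary_le:
  assumes "0 < t" "t < pi/2" "0 < L" "z \<le> L"
  shows "4 * sin t / (L + cos t)\<^sup>2 * \<bar>exp_sin_cube_antideriv (cos t) (sin t) (L - z)\<bar>
    \<le> 4 / L\<^sup>2 * exp (L - z)"
proof (rule mult_mono)
  have cos_t: "0 < cos t" "cos t \<le> 1" using assms(1,2) by (auto intro!: cos_gt_zero)
  have sin_t: "0 < sin t" "sin t \<le> 1" using assms(1,2) by (auto intro!: sin_gt_zero)
  show "4 * sin t / (L + cos t)\<^sup>2 \<le> 4 / L\<^sup>2"
    using assms(3) cos_t sin_t by (intro frac_le power_mono) auto
  have "cos t * (L - z) \<le> L - z"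
    using assms(4) cos_t by (intro mult_left_le_one_le) auto
  then have "exp (cos t * (L - z)) \<le> exp (L - z)" by simp
  then show "\<bar>exp_sin_cube_antideriv (cos t) (sin t) (L - z)\<bar> \<le> exp (L - z)"
    using abs_exp_sin_cube_antideriv_le[of "cos t" "sin t" "L - z"] by (simp del: exp_le_cancel_iff)
qed simp_all

lemma SigmaN_sq_approx:
  assumes "pi/2 < Ltarget c N" "1 < N" "0 \<le> z" "z \<le> Ltarget c N"
  shows "\<bar>(SigmaN c N z)\<^sup>2 / real N powr c
           - \<bar>sigma_profile (thetaN c N) * (ln (real N) / Ltarget c N) ^ 6\<bar>\<bar>
         \<le> 4 * exp (Ltarget c N - z) / ((Ltarget c N)\<^sup>2 * real N powr c)"
proof -
  define t L where "t = thetaN c N" "L = Ltarget c N"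
  note theta = betaN_via_thetaN[OF assms(1), folded t_L_def]
  define main where "main = 4 * sin t / (L + cos t)\<^sup>2 * (exp (cos t * L) * cube_endpoint_factor t)"
  define boundary where
    "boundary = 4 * sin t / (L + cos t)\<^sup>2 * exp_sin_cube_antideriv (cos t) (sin t) (L - z)"
  have L: "0 < L" using assms(1) pi_gt_zero unfolding t_L_def by linarith
  have sin_t: "0 < sin t" using theta(1,2) by (auto intro!: sin_gt_zero)
  have n: "0 < real N powr c" using assms(2) by simp
  have sigma: "(SigmaN c N z)\<^sup>2 = \<bar>main - boundary\<bar>"
    using integral_hN_sq_htilde[of c N z] assms(3) sin_t
    unfolding SigmaN_def sqrt_power2_eq_abs main_def boundary_def theta(3,4,5)
      exp_sin_cube_antideriv_endpoint[OF theta(6)]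
    by (simp add: right_diff_distrib)
  have main: "main / real N powr c = sigma_profile t * (ln (real N) / L) ^ 6"
    using sigma_profile_eq[OF sin_t L theta(6)] exp_Ltarget[OF assms(2), of c, folded t_L_def] n
    unfolding main_def by (simp add: field_simps)
  have boundary: "\<bar>boundary\<bar> \<le> 4 * exp (L - z) / L\<^sup>2"
    using exp_sin_cube_antideriv_boundary_le[OF theta(1,2) L, of z] assms(4) sin_t
    unfolding boundary_def t_L_def abs_mult by simp
  have "\<bar>(SigmaN c N z)\<^sup>2 / real N powr c - \<bar>main / real N powr c\<bar>\<bar>
      = \<bar>\<bar>main - boundary\<bar> - \<bar>main\<bar>\<bar> / real N powr c"
    unfolding sigma using n by (simp add: abs_divide flip: diff_divide_distrib)
  also have "\<dots> \<le> \<bar>boundary\<bar> / real N powr c"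
    using abs_triangle_ineq3[of "main - boundary" main] n by (intro divide_right_mono) auto
  also have "\<dots> \<le> 4 * exp (L - z) / (L\<^sup>2 * real N powr c)"
    using boundary n by (simp add: divide_right_mono flip: divide_divide_eq_left)
  finally show ?thesis unfolding main t_L_def .
qed

section \<open>Asymptotics\<close>

lemma eventually_Ltarget_gt_pi_half:
  "0 < c \<Longrightarrow> \<forall>\<^sub>F N in sequentially. pi/2 < Ltarget c N"
  unfolding Ltarget_def by real_asymp

lemma thetaN_tendsto:
  assumes "0 < c"
  shows "filterlim (thetaN c) (at_right 0) sequentially"
proof -
  have large: "\<forall>\<^sub>F N in sequentially. pi/2 < Ltarget c N"
    using assms by (rule eventually_Ltarget_gt_pi_half)
  have "((\<lambda>N. pi / Ltarget c N) \<longlongrightarrow> 0) sequentially"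
    using assms unfolding Ltarget_def by real_asymp
  moreover have "\<forall>\<^sub>F N in sequentially. 0 \<le> sin (thetaN c N) \<and> sin (thetaN c N) \<le> pi / Ltarget c N"
    using large
  proof eventually_elim
    case (elim N)
    note theta = betaN_via_thetaN[OF elim]
    have "0 < sin (thetaN c N)" using theta(1,2) by (intro sin_gt_zero) auto
    moreover have "0 < Ltarget c N" using elim pi_gt_zero by linarith
    ultimately show ?case using theta(1,6) by (simp add: field_simps)
  qed
  ultimately have "((\<lambda>N. sin (thetaN c N)) \<longlongrightarrow> 0) sequentially"
    by (auto intro: tendsto_sandwich[OF _ _ tendsto_const] elim: eventually_mono)
  then have "((\<lambda>N. arcsin (sin (thetaN c N))) \<longlongrightarrow> 0) sequentially"
    using isCont_tendsto_compose[OF isCont_arcsin, of 0] by simp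
  moreover have "\<forall>\<^sub>F N in sequentially. arcsin (sin (thetaN c N)) = thetaN c N \<and> 0 < thetaN c N"
    using large
  proof eventually_elim
    case (elim N)
    then show ?case using betaN_via_thetaN(1,2)[OF elim] by (auto intro!: arcsin_sin)
  qed
  ultimately show ?thesis
    by (auto intro!: tendsto_imp_filterlim_at_right elim: eventually_mono
        intro: Lim_transform_eventually[rotated])
qed

lemma SigmaN_sq_tendsto:
  assumes "0 < c"
    and "\<forall>\<^sub>F N in sequentially. 0 \<le> z N \<and> z N \<le> Ltarget c N"
    and "((\<lambda>N. exp (Ltarget c N - z N) / ((Ltarget c N)\<^sup>2 * real N powr c)) \<longlongrightarrow> 0) sequentially"
  shows "((\<lambda>N. (SigmaN c N (z N))\<^sup>2 / real N powr c) \<longlongrightarrow> (8 * pi\<^sup>2 / c ^ 3)\<^sup>2) sequentially"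
proof (rule Lim_transform)
  have "((\<lambda>N. sigma_profile (thetaN c N)) \<longlongrightarrow> 64 * pi ^ 4) sequentially"
    by (rule filterlim_compose[OF sigma_profile_tendsto thetaN_tendsto[OF assms(1)]])
  moreover have "((\<lambda>N. (ln (real N) / Ltarget c N) ^ 6) \<longlongrightarrow> inverse c ^ 6) sequentially"
    using assms(1) unfolding Ltarget_def by real_asymp
  ultimately have "((\<lambda>N. \<bar>sigma_profile (thetaN c N) * (ln (real N) / Ltarget c N) ^ 6\<bar>)
      \<longlongrightarrow> \<bar>64 * pi ^ 4 * inverse c ^ 6\<bar>) sequentially"
    by (intro tendsto_rabs tendsto_mult)
  moreover have "\<bar>64 * pi ^ 4 * inverse c ^ 6\<bar> = (8 * pi\<^sup>2 / c ^ 3)\<^sup>2"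
    using assms(1) by (simp add: power_divide field_simps eval_nat_numeral abs_mult)
  ultimately show "((\<lambda>N. \<bar>sigma_profile (thetaN c N) * (ln (real N) / Ltarget c N) ^ 6\<bar>)
      \<longlongrightarrow> (8 * pi\<^sup>2 / c ^ 3)\<^sup>2) sequentially"
    by simp
  have "\<forall>\<^sub>F N in sequentially. pi/2 < Ltarget c N \<and> 1 < N \<and> 0 \<le> z N \<and> z N \<le> Ltarget c N"
    using eventually_Ltarget_gt_pi_half[OF assms(1)] eventually_gt_at_top[of 1] assms(2)
    by eventually_elim auto
  then have "\<forall>\<^sub>F N in sequentially.
      norm ((SigmaN c N (z N))\<^sup>2 / real N powr c
            - \<bar>sigma_profile (thetaN c N) * (ln (real N) / Ltarget c N) ^ 6\<bar>)
      \<le> 4 * (exp (Ltarget c N - z N) / ((Ltarget c N)\<^sup>2 * real N powr c))"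
    by eventually_elim (use SigmaN_sq_approx in auto)
  then show "((\<lambda>N. (SigmaN c N (z N))\<^sup>2 / real N powr c
            - \<bar>sigma_profile (thetaN c N) * (ln (real N) / Ltarget c N) ^ 6\<bar>) \<longlongrightarrow> 0) sequentially"
    using tendsto_mult_right_zero[OF assms(3), of 4] by (rule Lim_null_comparison)
qed

lemma integral_N_htilde_AN_eq:
  assumes "pi/2 < Ltarget c N" "1 < ln (real N)" "0 < AN N"
  defines "t \<equiv> thetaN c N" and "r \<equiv> AN N / Ltarget c N"
  shows "integral {0..AN N} (\<lambda>x. real N * htilde c N x) / real N powr (1 - c)
    = exp ((1 - cos t) * angle_length t * (1 - r)) * (sin ((pi - t) * r) / ((pi - t) * r))
      * (AN N / ln (ln (real N)))"
proof -
  define L A where "L = Ltarget c N" "A = AN N"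
  note theta = betaN_via_thetaN[OF assms(1), folded t_def]
  have L: "0 < L" using assms(1) pi_gt_zero unfolding L_A_def by linarith
  have A: "0 < A" using assms(3) unfolding L_A_def by simp
  have N: "0 < real N" using assms(2) by (cases "N = 0") auto
  have sin_t: "0 < sin t" using theta(1,2) by (intro sin_gt_zero) auto
  have length: "angle_length t = L"
    using theta(6) sin_t unfolding angle_length_def L_A_def by (simp add: field_simps)
  have arg: "(pi - t) * r = sin t * A"
    unfolding r_def L_A_def[symmetric] theta(6)[folded L_A_def, symmetric] using L by simp
  have "exp ((1 - cos t) * angle_length t * (1 - r)) = exp (- cos t * (L - A)) * exp (L - A)"
    unfolding length r_def L_A_def[symmetric] exp_add[symmetric] using L by (simp add: field_simps)
  also have "exp (L - A) = real N powr c * ln (ln (real N))"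
    unfolding L_A_def by (rule exp_Ltarget_minus_AN[OF assms(2)])
  finally have "exp ((1 - cos t) * angle_length t * (1 - r))
      = exp (- cos t * (L - A)) * real N powr c * ln (ln (real N))" by simp
  moreover have "integral {0..A} (\<lambda>x. real N * htilde c N x)
      = real N * (exp (- cos t * (L - A)) * sin (sin t * A) / sin t)"
    using integral_htilde_eq[OF assms(1), of A] A unfolding t_def L_A_def by simp
  moreover have "real N powr (1 - c) = real N / real N powr c"
    using N by (simp add: powr_diff)
  moreover have "0 < ln (ln (real N))" using assms(2) by simp
  ultimately show ?thesis
    unfolding arg L_A_def[symmetric] using N A sin_t by (simp add: field_simps)
qed

lemma tendsto_sin_div_self:
  fixes f :: "'a \<Rightarrow> real"
  assumes "(f \<longlongrightarrow> 0) F" "\<forall>\<^sub>F x in F. f x \<noteq> 0"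
  shows "((\<lambda>x. sin (f x) / f x) \<longlongrightarrow> 1) F"
proof -
  have "((\<lambda>y::real. sin y / y) \<longlongrightarrow> 1) (at 0)" by real_asymp
  moreover have "filterlim f (at 0) F" using assms by (intro filterlim_atI)
  ultimately show ?thesis by (rule filterlim_compose[of "\<lambda>y. sin y / y"])
qed

lemma integral_N_htilde_tendsto:
  assumes "0 < c"
  shows "((\<lambda>N. integral {0..AN N} (\<lambda>x. real N * htilde c N x) / real N powr (1 - c)) \<longlongrightarrow> 6)
    sequentially"
proof -
  define t where "t N = thetaN c N" for N
  define r where "r N = AN N / Ltarget c N" for N
  have theta: "filterlim t (at_right 0) sequentially"
    unfolding t_def by (rule thetaN_tendsto[OF assms])
  have r: "(r \<longlongrightarrow> 0) sequentially"
    using assms unfolding r_def AN_def Ltarget_def by real_asymp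
  have "\<forall>\<^sub>F N in sequentially. 1 < ln (real N)" by real_asymp
  moreover have "\<forall>\<^sub>F N in sequentially. 0 < AN N" unfolding AN_def by real_asymp
  ultimately have large: "\<forall>\<^sub>F N in sequentially. pi/2 < Ltarget c N \<and> 1 < ln (real N) \<and> 0 < AN N"
    using eventually_Ltarget_gt_pi_half[OF assms] by eventually_elim auto
  have "((\<lambda>u. (1 - cos u) * angle_length u) \<longlongrightarrow> 0) (at_right 0)"
    unfolding angle_length_def by real_asymp
  then have exp_lim: "((\<lambda>N. exp ((1 - cos (t N)) * angle_length (t N) * (1 - r N))) \<longlongrightarrow> exp (0 * (1 - 0)))
      sequentially"
    by (intro tendsto_intros filterlim_compose[OF _ theta] r)
  have sinc_lim: "((\<lambda>N. sin ((pi - t N) * r N) / ((pi - t N) * r N)) \<longlongrightarrow> 1) sequentially"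
  proof (rule tendsto_sin_div_self)
    have "(t \<longlongrightarrow> 0) sequentially" using theta by (simp add: filterlim_at)
    from tendsto_mult[OF tendsto_diff[OF tendsto_const this] r]
    show "((\<lambda>N. (pi - t N) * r N) \<longlongrightarrow> 0) sequentially" by simp
    show "\<forall>\<^sub>F N in sequentially. (pi - t N) * r N \<noteq> 0"
      using large
    proof eventually_elim
      case (elim N)
      have "0 < Ltarget c N" using elim pi_gt_zero by linarith
      moreover have "t N < pi"
        using betaN_via_thetaN(2)[OF conjunct1[OF elim]] pi_gt_zero unfolding t_def by linarith
      ultimately show ?case using elim unfolding r_def by simp
    qed
  qed
  have ratio_lim: "((\<lambda>N. AN N / ln (ln (real N))) \<longlongrightarrow> 6) sequentially"
    unfolding AN_def by real_asymp
  have "((\<lambda>N. exp ((1 - cos (t N)) * angle_length (t N) * (1 - r N))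
        * (sin ((pi - t N) * r N) / ((pi - t N) * r N)) * (AN N / ln (ln (real N)))) \<longlongrightarrow> 6)
      sequentially"
    using tendsto_mult[OF tendsto_mult[OF exp_lim sinc_lim] ratio_lim] by simp
  moreover have "\<forall>\<^sub>F N in sequentially.
      exp ((1 - cos (t N)) * angle_length (t N) * (1 - r N))
        * (sin ((pi - t N) * r N) / ((pi - t N) * r N)) * (AN N / ln (ln (real N)))
      = integral {0..AN N} (\<lambda>x. real N * htilde c N x) / real N powr (1 - c)"
    using large unfolding t_def r_def
    by eventually_elim (rule integral_N_htilde_AN_eq[symmetric], auto)
  ultimately show ?thesis by (rule Lim_transform_eventually)
qed

theorem proposition1p1:
  fixes c :: real
  assumes "0 < c" "c < 1"
  shows "\<exists>\<sigma> > 0. \<exists>a > 0.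
    ((\<lambda>N. (SigmaN c N (LN c N))\<^sup>2 / real N powr c) \<longlonglongrightarrow> \<sigma>\<^sup>2) \<and>
    ((\<lambda>N. (SigmaN c N (AN N))\<^sup>2 / real N powr c) \<longlonglongrightarrow> \<sigma>\<^sup>2) \<and>
    ((\<lambda>N. integral {0..AN N} (\<lambda>x. real N * htilde c N x) / real N powr (1 - c)) \<longlonglongrightarrow> a)"
proof (intro exI conjI)
  have large: "\<forall>\<^sub>F N in sequentially. pi/2 < Ltarget c N"
    using assms(1) by (rule eventually_Ltarget_gt_pi_half)
  have "((\<lambda>N. (SigmaN c N (Ltarget c N))\<^sup>2 / real N powr c) \<longlonglongrightarrow> (8 * pi\<^sup>2 / c ^ 3)\<^sup>2)"
  proof (rule SigmaN_sq_tendsto[OF assms(1)])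
    show "\<forall>\<^sub>F N in sequentially. 0 \<le> Ltarget c N \<and> Ltarget c N \<le> Ltarget c N"
      using large by eventually_elim (use pi_gt_zero in linarith)
    show "(\<lambda>N. exp (Ltarget c N - Ltarget c N) / ((Ltarget c N)\<^sup>2 * real N powr c)) \<longlonglongrightarrow> 0"
      using assms(1) unfolding Ltarget_def by real_asymp
  qed
  moreover have "\<forall>\<^sub>F N in sequentially. Ltarget c N = LN c N"
    using large by eventually_elim (simp add: betaN_via_thetaN(5))
  ultimately show "((\<lambda>N. (SigmaN c N (LN c N))\<^sup>2 / real N powr c) \<longlonglongrightarrow> (8 * pi\<^sup>2 / c ^ 3)\<^sup>2)"
    by (rule Lim_transform_eventually[OF _ eventually_mono]) auto
  show "((\<lambda>N. (SigmaN c N (AN N))\<^sup>2 / real N powr c) \<longlonglongrightarrow> (8 * pi\<^sup>2 / c ^ 3)\<^sup>2)"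
  proof (rule SigmaN_sq_tendsto[OF assms(1)])
    show "\<forall>\<^sub>F N in sequentially. 0 \<le> AN N \<and> AN N \<le> Ltarget c N"
      unfolding AN_def Ltarget_def by (intro eventually_conj) (use assms(1) in real_asymp)+
    show "(\<lambda>N. exp (Ltarget c N - AN N) / ((Ltarget c N)\<^sup>2 * real N powr c)) \<longlonglongrightarrow> 0"
      using assms(1) unfolding AN_def Ltarget_def by real_asymp
  qed
  show "((\<lambda>N. integral {0..AN N} (\<lambda>x. real N * htilde c N x) / real N powr (1 - c)) \<longlonglongrightarrow> 6)"
    using assms(1) by (rule integral_N_htilde_tendsto)
qed (use assms(1) in simp_all)

end
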